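(* Let $I\subseteq\{1,\dots,N\}$ with cardinality $k$, $2\le k\le N$, and let $v$ be the center of the face $\Delta_I$, i.e. $v_i=1/k$ for $i\in I$ and $v_i=0$ otherwise. Then $v$ is a linearly stable equilibrium if $\alpha<(k-1)/(k-2)$, and a linearly unstable equilibrium if $\alpha>(k-1)/(k-2)$ (with the convention $(k-1)/(k-2)=+\infty$ when $k=2$).
   Context: Let $N\ge3$, $\alpha>1$, and $A_{i,j}=1-\delta_{i,j}$ for $i,j\le N$. Let $\Delta=\{v\in\mathbb R_+^N:\sum_iv_i=1,\ v_i\le3/4\ \forall i\}$ and $\Delta_I=\{v\in\Delta:v_i=0\ \forall i\notin I\}$. For $v$ with nonnegative coordinates let $v^\alpha=(v_i^\alpha)_i$, $H(v)=\sum_{i\neq j}v_i^\alpha v_j^\alpha$, $\pi_i(v)=v_i^\alpha(Av^\alpha)_i/H(v)$, and on $\Delta$ let $F(v)=-v+\pi(v)$. An equilibrium is $v\in\Delta$ with $F(v)=0$. With $DF(v)$ the differential at $v$ of $v\mapsto-v+\pi(v)$ acting on $\{x:\sum_ix_i=0\}$, an equilibrium is linearly stable if all eigenvalues of $DF(v)$ have negative real parts and linearly unstable if some eigenvalue has positive real part. *)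

theory Defs
  imports "HOL-Analysis.Analysis"
begin

text \<open>Coordinates are indexed by a finite type 'n with CARD('n) = N.
  v^alpha = (v_i^alpha)_i; A = all-ones matrix minus identity, so
  (A v^alpha)_i = sum over j different from i of v_j^alpha.\<close>

definition vpow :: "real \<Rightarrow> real^'n \<Rightarrow> real^'n" where
  "vpow \<alpha> v = (\<chi> i. (v$i) powr \<alpha>)"

definition Amat :: "real^'n^'n" where
  "Amat = (\<chi> i j. if i = j then 0 else 1)"

definition Hfun :: "real \<Rightarrow> real^'n \<Rightarrow> real" where
  "Hfun \<alpha> v = (\<Sum>i\<in>UNIV. \<Sum>j\<in>UNIV - {i}. (vpow \<alpha> v)$i * (vpow \<alpha> v)$j)"

definition pifun :: "real \<Rightarrow> real^'n \<Rightarrow> real^'n" where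
  "pifun \<alpha> v = (\<chi> i. (vpow \<alpha> v)$i * (Amat *v vpow \<alpha> v)$i / Hfun \<alpha> v)"

definition Ffun :: "real \<Rightarrow> real^'n \<Rightarrow> real^'n" where
  "Ffun \<alpha> v = - v + pifun \<alpha> v"

definition Simplex :: "(real^'n) set" where
  "Simplex = {v. (\<forall>i. 0 \<le> v$i \<and> v$i \<le> 3/4) \<and> (\<Sum>i\<in>UNIV. v$i) = 1}"

definition equilibrium :: "real \<Rightarrow> real^'n \<Rightarrow> bool" where
  "equilibrium \<alpha> v \<longleftrightarrow> v \<in> Simplex \<and> Ffun \<alpha> v = 0"

definition Tspace :: "(real^'n) set" where
  "Tspace = {x. (\<Sum>i\<in>UNIV. x$i) = 0}"

text \<open>Differential at v of the map -v + pi(v), which is defined on vectors with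
  nonnegative coordinates (so the derivative is taken within that orthant).\<close>
definition DF :: "real \<Rightarrow> real^'n \<Rightarrow> real^'n \<Rightarrow> real^'n" where
  "DF \<alpha> v = frechet_derivative (\<lambda>x. - x + pifun \<alpha> x) (at v within {x. \<forall>i. 0 \<le> x$i})"

text \<open>Complex eigenvalues of a real linear map L acting on a real subspace W:
  eigenvalues of its complexification, i.e. there is a nonzero z = x + i y with
  x, y in W and L z = lambda z.\<close>
definition eigenvalue_on :: "(real^'n \<Rightarrow> real^'n) \<Rightarrow> (real^'n) set \<Rightarrow> complex \<Rightarrow> bool" where
  "eigenvalue_on L W c \<longleftrightarrow> (\<exists>x y. x \<in> W \<and> y \<in> W \<and> (x \<noteq> 0 \<or> y \<noteq> 0) \<and>
       L x = Re c *\<^sub>R x - Im c *\<^sub>R y \<and> L y = Im c *\<^sub>R x + Re c *\<^sub>R y)"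

definition lin_stable_eq :: "real \<Rightarrow> real^'n \<Rightarrow> bool" where
  "lin_stable_eq \<alpha> v \<longleftrightarrow> equilibrium \<alpha> v \<and>
     (\<forall>c. eigenvalue_on (DF \<alpha> v) Tspace c \<longrightarrow> Re c < 0)"

definition lin_unstable_eq :: "real \<Rightarrow> real^'n \<Rightarrow> bool" where
  "lin_unstable_eq \<alpha> v \<longleftrightarrow> equilibrium \<alpha> v \<and>
     (\<exists>c. eigenvalue_on (DF \<alpha> v) Tspace c \<and> Re c > 0)"

definition face_center :: "'n set \<Rightarrow> real^'n" where
  "face_center I = (\<chi> i. if i \<in> I then 1 / real (card I) else 0)"

end

theory Submission
  imports Defs
begin

text \<open>
  Since \<open>\<pi>\<close> is the map \<open>\<rho>(w)\<^sub>i = w\<^sub>i (A w)\<^sub>i / \<langle>w, A w\<rangle>\<close> applied to \<open>w = v\<^sup>\<alpha>\<close>, and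
  \<open>\<rho>\<close> is homogeneous of degree 0, the centre \<open>v\<close> of \<open>\<Delta>\<^sub>I\<close>, whose power \<open>v\<^sup>\<alpha>\<close> is again
  constant on \<open>I\<close>, is a fixed point of \<open>\<pi>\<close>. For \<open>\<alpha> > 1\<close> the map \<open>x \<mapsto> x\<^sup>\<alpha>\<close> has
  derivative 0 at 0, so the chain rule gives
  \<open>(DF(v) h)\<^sub>i = -h\<^sub>i + \<alpha> ((k-2)/(k-1) h\<^sub>i + (1/(k-1) - 2/k) \<Sum>\<^sub>I h)\<close> for \<open>i \<in> I\<close>
  and \<open>-h\<^sub>i\<close> otherwise.
  On the tangent space this acts as \<open>-1\<close> on the coordinates outside \<open>I\<close> and, on vectors supported
  in \<open>I\<close> with zero sum, as multiplication by \<open>\<alpha>(k-2)/(k-1) - 1\<close>. These are therefore the only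
  eigenvalues, and the second one is attained; it is negative for \<open>k = 2\<close> and otherwise has the
  sign of \<open>\<alpha> - (k-1)/(k-2)\<close>.
\<close>

lemma has_real_derivative_powr_within_nonneg:
  fixes a t :: real
  assumes "a > 1" and "t \<ge> 0"
  shows "((\<lambda>s. s powr a) has_real_derivative a * t powr (a - 1)) (at t within {0..})"
proof (cases "t > 0")
  case True
  then show ?thesis
    using has_real_derivative_powr has_field_derivative_at_within by blast
next
  case False
  with assms have "t = 0" by simp
  have "((\<lambda>y::real. y powr (a - 1)) \<longlongrightarrow> 0) (at 0 within {0..})"
    by (rule tendsto_zero_powrI[where b = "a - 1"])
      (use assms in \<open>auto intro!: tendsto_ident_at simp: eventually_at_filter\<close>)
  then have "((\<lambda>y::real. (y powr a - 0 powr a) / (y - 0)) \<longlongrightarrow> 0) (at 0 within {0..})"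
    by (rule Lim_transform_within[OF _ zero_less_one]) (auto simp: powr_diff)
  with \<open>t = 0\<close> show ?thesis
    by (simp add: has_field_derivative_iff)
qed

lemma has_derivative_vec_nthI:
  fixes f :: "'a::real_normed_vector \<Rightarrow> real^'n"
  assumes "\<And>i. ((\<lambda>x. f x $ i) has_derivative (\<lambda>h. f' h $ i)) (at a within S)"
  shows "(f has_derivative f') (at a within S)"
proof -
  have "((\<lambda>x. f x \<bullet> b) has_derivative (\<lambda>h. f' h \<bullet> b)) (at a within S)" if "b \<in> Basis" for b
  proof -
    from that obtain i where "b = axis i 1"
      unfolding Basis_vec_def by auto
    then have "\<And>y::real^'n. y \<bullet> b = y $ i"
      by (simp add: inner_axis)
    then show ?thesis
      using assms by simp
  qed
  then show ?thesis
    using has_derivative_componentwise_within by blast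
qed

lemma Amat_mult_nth: "(Amat *v x) $ i = (\<Sum>j\<in>UNIV. x $ j) - x $ i"
proof -
  have "(Amat *v x) $ i = (\<Sum>j\<in>UNIV. x $ j - (if j = i then x $ i else 0))"
    unfolding Amat_def matrix_vector_mult_def by (auto intro: sum.cong)
  then show ?thesis
    by (simp add: sum_subtractf)
qed

lemma Hfun_eq_inner: "Hfun a v = vpow a v \<bullet> (Amat *v vpow a v)"
  unfolding Hfun_def inner_vec_def Amat_mult_nth
  by (simp add: sum_diff1 sum_distrib_left right_diff_distrib)

definition replicator :: "real^'n \<Rightarrow> real^'n" where
  "replicator w = (\<chi> i. w $ i * (Amat *v w) $ i / (w \<bullet> (Amat *v w)))"

lemma pifun_eq_replicator: "pifun a v = replicator (vpow a v)"
  by (simp add: pifun_def replicator_def Hfun_eq_inner)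

definition replicator_deriv :: "real^'n \<Rightarrow> real^'n \<Rightarrow> real^'n" where
  "replicator_deriv w u = (\<chi> i.
     ((w $ i * (Amat *v u) $ i + u $ i * (Amat *v w) $ i) * (w \<bullet> (Amat *v w))
       - w $ i * (Amat *v w) $ i * (w \<bullet> (Amat *v u) + u \<bullet> (Amat *v w)))
     / ((w \<bullet> (Amat *v w)) * (w \<bullet> (Amat *v w))))"

lemma has_derivative_replicator:
  fixes w :: "real^'n"
  assumes "w \<bullet> (Amat *v w) \<noteq> 0"
  shows "(replicator has_derivative replicator_deriv w) (at w within S)"
proof -
  have A: "((\<lambda>x. Amat *v x) has_derivative (\<lambda>h. Amat *v h)) (at w within S)"
    by (rule bounded_linear.has_derivative[OF matrix_vector_mul_bounded_linear has_derivative_ident])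
  have nth: "((\<lambda>x. x $ i) has_derivative (\<lambda>h. h $ i)) (at w within S)" for i
    by (rule bounded_linear.has_derivative[OF bounded_linear_vec_nth has_derivative_ident])
  have A_nth: "((\<lambda>x. (Amat *v x) $ i) has_derivative (\<lambda>h. (Amat *v h) $ i)) (at w within S)" for i
    by (rule bounded_linear.has_derivative[OF bounded_linear_vec_nth A])
  show ?thesis
    unfolding replicator_def replicator_deriv_def
    by (rule has_derivative_vec_nthI, unfold vec_lambda_beta)
      (rule has_derivative_divide'[OF has_derivative_mult[OF nth A_nth]
          has_derivative_inner[OF has_derivative_ident A] assms])
qed

definition nonneg_orthant :: "(real^'n) set" where
  "nonneg_orthant = {x. \<forall>i. 0 \<le> x $ i}"

lemma has_derivative_vpow:
  assumes "a > 1" and "v \<in> nonneg_orthant"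
  shows "(vpow a has_derivative (\<lambda>h. \<chi> j. a * v $ j powr (a - 1) * h $ j)) (at v within nonneg_orthant)"
  unfolding vpow_def
proof (rule has_derivative_vec_nthI, unfold vec_lambda_beta)
  fix j
  have "((\<lambda>s. s powr a) has_derivative (\<lambda>t. a * v $ j powr (a - 1) * t)) (at (v $ j) within {0..})"
    using has_real_derivative_powr_within_nonneg[OF \<open>a > 1\<close>] assms(2)
    by (simp add: has_field_derivative_def nonneg_orthant_def)
  then have "((\<lambda>s. s powr a) has_derivative (\<lambda>t. a * v $ j powr (a - 1) * t))
      (at (v $ j) within (\<lambda>x. x $ j) ` nonneg_orthant)"
    by (rule has_derivative_subset) (auto simp: nonneg_orthant_def)
  then show "((\<lambda>x. x $ j powr a) has_derivative (\<lambda>h. a * v $ j powr (a - 1) * h $ j))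
      (at v within nonneg_orthant)"
    by (rule has_derivative_in_compose[OF
          bounded_linear.has_derivative[OF bounded_linear_vec_nth has_derivative_ident]])
qed

lemma DF_eqI:
  fixes v :: "real^'n"
  assumes "v \<in> nonneg_orthant"
    and deriv: "((\<lambda>x. - x + pifun a x) has_derivative D) (at v within nonneg_orthant)"
  shows "DF a v = D"
proof -
  have "(\<lambda>x. - x + pifun a x) differentiable (at v within nonneg_orthant)"
    using deriv by (rule differentiableI)
  then have "((\<lambda>x. - x + pifun a x) has_derivative DF a v) (at v within nonneg_orthant)"
    unfolding frechet_derivative_works DF_def nonneg_orthant_def .
  then show ?thesis
  proof (rule frechet_derivative_unique_within[OF _ deriv])
    fix b :: "real^'n" and e :: real
    assume "b \<in> Basis" and "e > 0"
    then obtain j where "b = axis j 1"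
      unfolding Basis_vec_def by auto
    with assms(1) \<open>e > 0\<close> show "\<exists>d. 0 < \<bar>d\<bar> \<and> \<bar>d\<bar> < e \<and> v + d *\<^sub>R b \<in> nonneg_orthant"
      by (intro exI[of _ "e / 2"]) (auto simp: nonneg_orthant_def axis_def)
  qed
qed

lemma inner_vec_supported:
  fixes x y :: "real^'n"
  assumes "\<And>j. j \<notin> I \<Longrightarrow> x $ j = 0"
  shows "x \<bullet> y = (\<Sum>j\<in>I. x $ j * y $ j)"
  unfolding inner_vec_def inner_real_def using assms
  by (intro sum.mono_neutral_right) auto

lemma face_center_in_Simplex:
  assumes "card I \<ge> 2"
  shows "face_center I \<in> Simplex"
proof -
  have "card I \<noteq> 0"
    using assms by auto
  then have "(\<Sum>i\<in>UNIV. face_center I $ i) = 1"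
    by (simp add: face_center_def sum.If_cases)
  moreover have "1 / real (card I) \<le> 3 / 4"
    using assms by (auto simp: divide_le_eq)
  ultimately show ?thesis
    by (simp add: Simplex_def face_center_def)
qed

definition uniform_on :: "'n set \<Rightarrow> real \<Rightarrow> real^'n" where
  "uniform_on I c = (\<chi> j. if j \<in> I then c else 0)"

lemma uniform_on_nth: "uniform_on I c $ j = (if j \<in> I then c else 0)"
  by (simp add: uniform_on_def)

lemma face_center_eq_uniform_on: "face_center I = uniform_on I (1 / real (card I))"
  by (simp add: face_center_def uniform_on_def)

lemma vpow_uniform_on: "vpow a (uniform_on I c) = uniform_on I (c powr a)"
  by (simp add: vpow_def uniform_on_def vec_eq_iff)

lemma Amat_mult_uniform_on_nth:
  "(Amat *v uniform_on I c) $ j = (real (card I) - (if j \<in> I then 1 else 0)) * c"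
  by (simp add: Amat_mult_nth uniform_on_nth sum.If_cases algebra_simps)

lemma inner_Amat_uniform_on:
  "uniform_on I c \<bullet> (Amat *v uniform_on I c) = real (card I) * (real (card I) - 1) * c\<^sup>2"
  by (simp add: inner_vec_supported[of I] uniform_on_nth Amat_mult_uniform_on_nth power2_eq_square)

lemma replicator_uniform_on:
  assumes "c \<noteq> 0" and "card I \<ge> 2"
  shows "replicator (uniform_on I c) = face_center I"
proof -
  have "real (card I) - 1 \<noteq> 0"
    using assms(2) by simp
  with assms show ?thesis
    by (auto simp: replicator_def face_center_def vec_eq_iff inner_Amat_uniform_on
        Amat_mult_uniform_on_nth uniform_on_nth power2_eq_square)
qed

lemma replicator_deriv_uniform_on:
  fixes u :: "real^'n"
  assumes "c \<noteq> 0" and "card I \<ge> 2" and supp: "\<And>j. j \<notin> I \<Longrightarrow> u $ j = 0"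
  defines "k \<equiv> real (card I)" and "U \<equiv> (\<Sum>m\<in>I. u $ m)"
  shows "replicator_deriv (uniform_on I c) u $ i
    = (if i \<in> I then ((k - 2) / (k - 1) * u $ i + (1 / (k - 1) - 2 / k) * U) / (k * c) else 0)"
proof (cases "i \<in> I")
  case True
  define w where "w = uniform_on I c"
  have "k \<noteq> 0" "k - 1 \<noteq> 0"
    using assms(2) by (auto simp: k_def)
  have Au: "(Amat *v u) $ j = U - u $ j" for j
    using supp by (simp add: Amat_mult_nth U_def sum.mono_neutral_right)
  have "w \<bullet> (Amat *v u) = (\<Sum>j\<in>I. c * (U - u $ j))"
    by (simp add: w_def inner_vec_supported[of I] uniform_on_nth Au)
  then have wAu: "w \<bullet> (Amat *v u) = (k - 1) * c * U"
    by (simp add: sum_distrib_left[symmetric] sum_subtractf U_def k_def algebra_simps)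
  have "u \<bullet> (Amat *v w) = (\<Sum>j\<in>I. (k - 1) * c * u $ j)"
    using supp by (simp add: w_def inner_vec_supported[of I] Amat_mult_uniform_on_nth k_def mult_ac)
  then have uAw: "u \<bullet> (Amat *v w) = (k - 1) * c * U"
    by (simp add: sum_distrib_left[symmetric] U_def)
  have "replicator_deriv w u $ i
      = (k * (k - 1) * c ^ 3 * (U + (k - 2) * u $ i) - 2 * (k - 1)\<^sup>2 * c ^ 3 * U)
        / (k\<^sup>2 * (k - 1)\<^sup>2 * c ^ 4)" (is "_ = ?N / ?D")
    using True by (simp add: replicator_deriv_def w_def wAu[unfolded w_def] uAw[unfolded w_def]
        inner_Amat_uniform_on Amat_mult_uniform_on_nth Au k_def uniform_on_nth)
      (simp add: algebra_simps power_def)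
  also have "\<dots> = (k * (k - 2) * u $ i + (2 - k) * U) / (k * (k - 1) * (k * c))"
  proof -
    have "?N = ((k - 1) * c ^ 3) * (k * (k - 2) * u $ i + (2 - k) * U)"
      and "?D = ((k - 1) * c ^ 3) * (k * (k - 1) * (k * c))"
      by algebra+
    with \<open>k - 1 \<noteq> 0\<close> \<open>c \<noteq> 0\<close> show ?thesis
      by simp
  qed
  also have "\<dots> = ((k - 2) / (k - 1) * u $ i + (1 / (k - 1) - 2 / k) * U) / (k * c)"
    using \<open>k \<noteq> 0\<close> \<open>k - 1 \<noteq> 0\<close> \<open>c \<noteq> 0\<close> by (simp add: divide_simps)
  finally show ?thesis
    using True by (simp add: w_def)
qed (simp add: replicator_deriv_def uniform_on_nth supp)

lemma pifun_face_center:
  assumes "card I \<ge> 2"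
  shows "pifun a (face_center I) = face_center I"
proof -
  have "(1 / real (card I)) powr a \<noteq> 0"
    using assms by auto
  have "pifun a (face_center I) = replicator (uniform_on I ((1 / real (card I)) powr a))"
    by (simp add: pifun_eq_replicator face_center_eq_uniform_on vpow_uniform_on)
  also have "\<dots> = face_center I"
    by (rule replicator_uniform_on[OF \<open>(1 / real (card I)) powr a \<noteq> 0\<close> assms])
  finally show ?thesis .
qed

lemma equilibrium_face_center:
  assumes "card I \<ge> 2"
  shows "equilibrium a (face_center I)"
  using assms by (simp add: equilibrium_def Ffun_def face_center_in_Simplex pifun_face_center)

definition face_linearization :: "real \<Rightarrow> 'n::finite set \<Rightarrow> real^'n \<Rightarrow> real^'n" where
  "face_linearization a I h = (\<chi> i. - h $ i + (if i \<in> I then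
     a * ((real (card I) - 2) / (real (card I) - 1) * h $ i
       + (1 / (real (card I) - 1) - 2 / real (card I)) * (\<Sum>m\<in>I. h $ m)) else 0))"

lemma replicator_deriv_uniform_on_eq_face_linearization:
  fixes I :: "'n::finite set"
  assumes "c \<noteq> 0" and "card I \<ge> 2"
  shows "- h + replicator_deriv (uniform_on I c) (\<chi> j. if j \<in> I then a * real (card I) * c * h $ j else 0)
    = face_linearization a I h"
proof -
  define k p q where "k = real (card I)" and "p = (k - 2) / (k - 1)" and "q = 1 / (k - 1) - 2 / k"
  define u where "u = (\<chi> j. if j \<in> I then a * k * c * h $ j else 0)"
  have "k > 0"
    using assms(2) by (auto simp: k_def)
  have u_nth: "u $ j = (if j \<in> I then a * k * c * h $ j else 0)" for j
    by (simp add: u_def)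
  then have "\<And>j. j \<notin> I \<Longrightarrow> u $ j = 0"
    by simp
  note deriv = replicator_deriv_uniform_on[OF assms this, folded k_def p_def q_def]
  have "(\<Sum>m\<in>I. u $ m) = a * k * c * (\<Sum>m\<in>I. h $ m)"
    by (simp add: u_def sum_distrib_left)
  moreover have "p * (a * k * c * x) + q * (a * k * c * y) = (k * c) * (a * (p * x + q * y))"
    for x y :: real
    by (simp add: algebra_simps)
  ultimately have "(- h + replicator_deriv (uniform_on I c) u) $ i = face_linearization a I h $ i" for i
    using \<open>k > 0\<close> \<open>c \<noteq> 0\<close>
    by (simp add: deriv face_linearization_def u_nth p_def[symmetric] q_def[symmetric] k_def[symmetric])
  then show ?thesis
    unfolding vec_eq_iff u_def k_def by simp
qed

lemma DF_face_center:
  fixes I :: "'n::finite set"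
  assumes "a > 1" and "card I \<ge> 2"
  shows "DF a (face_center I) = face_linearization a I"
proof -
  define k where "k = real (card I)"
  define c where "c = (1 / k) powr a"
  have "I \<noteq> {}"
    using assms(2) by auto
  then have "k > 0" "c \<noteq> 0"
    by (auto simp: k_def c_def)
  have v: "face_center I \<in> nonneg_orthant"
    by (simp add: nonneg_orthant_def face_center_def)
  have w: "vpow a (face_center I) = uniform_on I c"
    by (simp add: face_center_eq_uniform_on vpow_uniform_on c_def k_def)
  have H: "uniform_on I c \<bullet> (Amat *v uniform_on I c) \<noteq> 0"
    using assms(2) \<open>c \<noteq> 0\<close> \<open>I \<noteq> {}\<close> by (simp add: inner_Amat_uniform_on)
  have "DF a (face_center I) = (\<lambda>h. - h + replicator_deriv (uniform_on I c)
      (\<chi> j. a * face_center I $ j powr (a - 1) * h $ j))"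
    by (rule DF_eqI[OF v], unfold pifun_eq_replicator, fold w)
      (intro has_derivative_add has_derivative_minus has_derivative_ident
        has_derivative_compose[OF has_derivative_vpow[OF assms(1) v] has_derivative_replicator[OF H[folded w]]])
  moreover have "(1 / k) powr (a - 1) = k * c"
    using \<open>k > 0\<close> by (simp add: c_def powr_diff divide_simps)
  then have "(\<chi> j. a * face_center I $ j powr (a - 1) * h $ j)
      = (\<chi> j. if j \<in> I then a * real (card I) * c * h $ j else 0)" for h
    by (simp add: vec_eq_iff face_center_def k_def)
  ultimately show ?thesis
    by (simp only: replicator_deriv_uniform_on_eq_face_linearization[OF \<open>c \<noteq> 0\<close> assms(2)])
qed

lemma eigenvalue_on_coordinate_vanishes:
  assumes "L x = Re c *\<^sub>R x - Im c *\<^sub>R y" and "L y = Im c *\<^sub>R x + Re c *\<^sub>R y"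
    and "L x $ j = \<mu> * x $ j" and "L y $ j = \<mu> * y $ j" and "c \<noteq> complex_of_real \<mu>"
  shows "x $ j = 0 \<and> y $ j = 0"
proof -
  have "L x $ j = Re c * x $ j - Im c * y $ j" "L y $ j = Im c * x $ j + Re c * y $ j"
    using assms(1,2) by simp_all
  then have "(complex_of_real \<mu> - c) * Complex (x $ j) (y $ j) = 0"
    using assms(3,4) by (simp add: complex_eq_iff algebra_simps)
  with assms(5) have "Complex (x $ j) (y $ j) = 0"
    by simp
  then show ?thesis
    by (simp add: complex_eq_iff)
qed

lemma sum_Tspace_supported:
  assumes "z \<in> Tspace" and "\<And>j. j \<notin> I \<Longrightarrow> z $ j = 0"
  shows "(\<Sum>m\<in>I. z $ m) = 0"
proof -
  have "(\<Sum>m\<in>UNIV. z $ m) = (\<Sum>m\<in>I. z $ m)"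
    using assms(2) by (intro sum.mono_neutral_right) auto
  with assms(1) show ?thesis
    by (simp add: Tspace_def)
qed

lemma face_linearization_eigenvalues:
  fixes I :: "'n::finite set"
  assumes "eigenvalue_on (face_linearization a I) Tspace c"
  shows "c = -1 \<or> c = complex_of_real (a * (real (card I) - 2) / (real (card I) - 1) - 1)"
proof (rule ccontr)
  define g where "g = a * (real (card I) - 2) / (real (card I) - 1)"
  assume "\<not> ?thesis"
  then have "c \<noteq> complex_of_real (-1)" "c \<noteq> complex_of_real (g - 1)"
    by (auto simp: g_def)
  from assms obtain x y where "x \<in> Tspace" "y \<in> Tspace" "x \<noteq> 0 \<or> y \<noteq> 0"
    and ex: "face_linearization a I x = Re c *\<^sub>R x - Im c *\<^sub>R y"
    and ey: "face_linearization a I y = Im c *\<^sub>R x + Re c *\<^sub>R y"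
    unfolding eigenvalue_on_def by blast
  have outside: "x $ j = 0 \<and> y $ j = 0" if "j \<notin> I" for j
    using eigenvalue_on_coordinate_vanishes[OF ex ey _ _ \<open>c \<noteq> complex_of_real (-1)\<close>] that
    by (simp add: face_linearization_def)
  then have "(\<Sum>m\<in>I. x $ m) = 0" "(\<Sum>m\<in>I. y $ m) = 0"
    using sum_Tspace_supported \<open>x \<in> Tspace\<close> \<open>y \<in> Tspace\<close> by blast+
  then have "x $ j = 0 \<and> y $ j = 0" if "j \<in> I" for j
    using eigenvalue_on_coordinate_vanishes[OF ex ey _ _ \<open>c \<noteq> complex_of_real (g - 1)\<close>] that
    by (simp add: face_linearization_def g_def algebra_simps)
  with outside have "x = 0" "y = 0"
    by (auto simp: vec_eq_iff)
  with \<open>x \<noteq> 0 \<or> y \<noteq> 0\<close> show False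
    by simp
qed

lemma face_linearization_eigenvalue_in_face:
  fixes I :: "'n::finite set"
  assumes "card I \<ge> 2"
  shows "eigenvalue_on (face_linearization a I) Tspace
    (complex_of_real (a * (real (card I) - 2) / (real (card I) - 1) - 1))"
proof -
  obtain p q where "p \<in> I" "q \<in> I" "p \<noteq> q"
    using assms card_le_Suc0_iff_eq[of I] by force
  define x :: "real^'n" where "x = axis p 1 - axis q 1"
  have "x \<in> Tspace" "x \<noteq> 0" "(\<Sum>m\<in>I. x $ m) = 0"
    using \<open>p \<in> I\<close> \<open>q \<in> I\<close> \<open>p \<noteq> q\<close>
    by (auto simp: x_def Tspace_def vec_eq_iff axis_def sum_subtractf)
  moreover have "x $ j = 0" if "j \<notin> I" for j
    using that \<open>p \<in> I\<close> \<open>q \<in> I\<close> by (auto simp: x_def axis_def)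
  ultimately have "face_linearization a I x = (a * (real (card I) - 2) / (real (card I) - 1) - 1) *\<^sub>R x"
    by (auto simp: face_linearization_def vec_eq_iff algebra_simps)
  moreover have "face_linearization a I 0 = 0"
    by (simp add: face_linearization_def vec_eq_iff)
  ultimately show ?thesis
    using \<open>x \<in> Tspace\<close> \<open>x \<noteq> 0\<close> unfolding eigenvalue_on_def
    by (intro exI[of _ x] exI[of _ 0]) (simp add: Tspace_def)
qed

theorem lemma4p2:
  fixes \<alpha> :: real and I :: "('n::finite) set" and k :: nat
  assumes "CARD('n) \<ge> 3" and "\<alpha> > 1"
    and "card I = k" and "2 \<le> k"
  shows "((k = 2 \<or> \<alpha> < (real k - 1) / (real k - 2)) \<longrightarrow> lin_stable_eq \<alpha> (face_center I))
    \<and> ((k > 2 \<and> \<alpha> > (real k - 1) / (real k - 2)) \<longrightarrow> lin_unstable_eq \<alpha> (face_center I))"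
proof -
  define g where "g = \<alpha> * (real k - 2) / (real k - 1)"
  have eq: "equilibrium \<alpha> (face_center I)" and DF: "DF \<alpha> (face_center I) = face_linearization \<alpha> I"
    using assms by (simp_all add: equilibrium_face_center DF_face_center)
  have spectrum: "Re c = -1 \<or> Re c = g - 1" if "eigenvalue_on (DF \<alpha> (face_center I)) Tspace c" for c
    using face_linearization_eigenvalues[of \<alpha> I c] that assms(3) by (auto simp: DF g_def)
  show ?thesis
  proof (intro conjI impI)
    assume stable: "k = 2 \<or> \<alpha> < (real k - 1) / (real k - 2)"
    have "g < 1"
    proof (cases "k = 2")
      case False
      with assms(4) have "real k - 2 > 0"
        by simp
      with stable False show ?thesis
        by (simp add: g_def pos_less_divide_eq pos_divide_less_eq)
    qed (simp add: g_def)
    with eq spectrum show "lin_stable_eq \<alpha> (face_center I)"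
      unfolding lin_stable_eq_def by force
  next
    assume "k > 2 \<and> \<alpha> > (real k - 1) / (real k - 2)"
    then have "g > 1"
      by (auto simp: g_def field_simps)
    with eq show "lin_unstable_eq \<alpha> (face_center I)"
      unfolding lin_unstable_eq_def DF
      using face_linearization_eigenvalue_in_face[of I \<alpha>] assms(3,4) by (auto simp: g_def)
  qed
qed

end
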